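(* Let $G$ be a finite group and let $\phi=a_1\chi_1+\cdots+a_q\chi_q$ be a real-valued virtual character of $G$, where $a_i\in\mathbb{R}$ and $\chi_i$ are irreducible complex characters of $G$ with $n_i=\chi_i(1)$. Then for every $g\in G$, $$\mathbb{E}(\xi_{g,\phi})=\sum_{i=1}^q\frac{a_i}{n_i^2}\chi_i(g),$$ and if $\phi$ is real-valued and non-negative, then for every $g\in G$, $$c(g)\le\frac{\mathbb{E}(\xi_{g,\phi})}{\phi(1)}=\frac{(a_1/n_1^2)\chi_1(g)+\cdots+(a_q/n_q^2)\chi_q(g)}{a_1n_1+\cdots+a_qn_q}.$$
   Context: $G$ is a finite group of order $m$; $G\times G$ carries the uniform probability measure and $\mathbb{E}$ is expectation with respect to it. $c(g)=|\{(x,y)\in G\times G:[x,y]=g\}|/|G|^2$. For $g\in G$, $\xi_{g,\phi}(a,b)=\mathrm{Re}\big(\phi([a,b]^{-1}g)\big)$ for $(a,b)\in G\times G$. A virtual character $\phi=\sum_{\chi\in\mathrm{Irr}(G)}a_\chi\chi$ is non-negative if (a) $\mathrm{Re}(\phi(h))\ge0$ for all $h\in G$, and (b) all $a_\chi$ are non-negative reals, not all zero. *)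

theory Defs
  imports "HOL-Algebra.Group" "Jordan_Normal_Form.Matrix"
begin

definition commutator :: "('a, 'b) monoid_scheme \<Rightarrow> 'a \<Rightarrow> 'a \<Rightarrow> 'a" where
  "commutator G x y = inv\<^bsub>G\<^esub> x \<otimes>\<^bsub>G\<^esub> inv\<^bsub>G\<^esub> y \<otimes>\<^bsub>G\<^esub> x \<otimes>\<^bsub>G\<^esub> y"

definition mat_trace :: "complex mat \<Rightarrow> complex" where
  "mat_trace A = (\<Sum>i<dim_row A. A $$ (i, i))"

text \<open>A complex representation of degree n: homomorphism from G into n x n complex matrices
  (the image consists automatically of invertible matrices).\<close>
definition is_rep :: "('a, 'b) monoid_scheme \<Rightarrow> nat \<Rightarrow> ('a \<Rightarrow> complex mat) \<Rightarrow> bool" where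
  "is_rep G n \<rho> \<longleftrightarrow> 0 < n \<and> (\<forall>g\<in>carrier G. \<rho> g \<in> carrier_mat n n) \<and>
     \<rho> \<one>\<^bsub>G\<^esub> = 1\<^sub>m n \<and>
     (\<forall>g\<in>carrier G. \<forall>h\<in>carrier G. \<rho> (g \<otimes>\<^bsub>G\<^esub> h) = \<rho> g * \<rho> h)"

definition is_subspace :: "nat \<Rightarrow> complex vec set \<Rightarrow> bool" where
  "is_subspace n W \<longleftrightarrow> W \<subseteq> carrier_vec n \<and> 0\<^sub>v n \<in> W \<and>
     (\<forall>v\<in>W. \<forall>w\<in>W. v + w \<in> W) \<and> (\<forall>c. \<forall>v\<in>W. c \<cdot>\<^sub>v v \<in> W)"

definition irreducible_rep :: "('a, 'b) monoid_scheme \<Rightarrow> nat \<Rightarrow> ('a \<Rightarrow> complex mat) \<Rightarrow> bool" where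
  "irreducible_rep G n \<rho> \<longleftrightarrow> is_rep G n \<rho> \<and>
     (\<forall>W. is_subspace n W \<and> (\<forall>g\<in>carrier G. \<forall>v\<in>W. \<rho> g *\<^sub>v v \<in> W)
        \<longrightarrow> W = {0\<^sub>v n} \<or> W = carrier_vec n)"

definition Irr :: "('a, 'b) monoid_scheme \<Rightarrow> ('a \<Rightarrow> complex) set" where
  "Irr G = {\<chi>. \<exists>n \<rho>. irreducible_rep G n \<rho> \<and>
              \<chi> = (\<lambda>g. if g \<in> carrier G then mat_trace (\<rho> g) else 0)}"

definition comm_prob :: "('a, 'b) monoid_scheme \<Rightarrow> 'a \<Rightarrow> real" where
  "comm_prob G g = real (card {(x, y). x \<in> carrier G \<and> y \<in> carrier G \<and> commutator G x y = g})
                    / real (card (carrier G)) ^ 2"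

text \<open>Expectation of xi_{g,phi}(a,b) = Re(phi([a,b]^{-1} g)) under the uniform measure on G x G.\<close>
definition exp_xi :: "('a, 'b) monoid_scheme \<Rightarrow> ('a \<Rightarrow> complex) \<Rightarrow> 'a \<Rightarrow> real" where
  "exp_xi G \<phi> g = (\<Sum>a\<in>carrier G. \<Sum>b\<in>carrier G.
        Re (\<phi> (inv\<^bsub>G\<^esub> (commutator G a b) \<otimes>\<^bsub>G\<^esub> g))) / real (card (carrier G)) ^ 2"

end

(* For an irreducible representation rho of degree n and any matrix X, the average
   sum_a rho(a^-1) X rho(a) commutes with rho, so by Schur's lemma it is the scalar
   |G| tr(X) / n.  Since [a,b]^-1 g = b^-1 a^-1 b (a g), averaging over b and then over a
   (the latter through the orthogonality of matrix entries obtained from X = E_lm) gives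
   sum_{a,b} chi([a,b]^-1 g) = (|G| / chi(1))^2 chi(g), and the formula for E(xi_{g,phi})
   follows by linearity.  For the bound, each pair (a,b) with [a,b] = g contributes phi(1)
   to |G|^2 E(xi_{g,phi}), and all other pairs contribute non-negative amounts. *)

theory Submission
  imports Defs "Jordan_Normal_Form.Spectral_Radius"
begin

lemma mat_trace_mult_comm:
  assumes "A \<in> carrier_mat n m" and "B \<in> carrier_mat m n"
  shows "mat_trace (A * B) = mat_trace (B * A)"
  using assms unfolding mat_trace_def
  by (auto simp: scalar_prod_def lessThan_atLeast0[symmetric] mult.commute intro: sum.swap)

lemma mat_trace_smult:
  assumes "A \<in> carrier_mat n n"
  shows "mat_trace (c \<cdot>\<^sub>m A) = c * mat_trace A"
  using assms unfolding mat_trace_def by (simp add: sum_distrib_left)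

lemma mat_trace_one_mat: "mat_trace (1\<^sub>m n) = of_nat n"
  unfolding mat_trace_def by simp

definition mat_sum :: "nat \<Rightarrow> ('b \<Rightarrow> 'a :: comm_monoid_add mat) \<Rightarrow> 'b set \<Rightarrow> 'a mat" where
  "mat_sum n f S = mat n n (\<lambda>(i, j). \<Sum>x\<in>S. f x $$ (i, j))"

lemma mat_sum_carrier [simp]: "mat_sum n f S \<in> carrier_mat n n"
  unfolding mat_sum_def by simp

lemma dim_mat_sum [simp]: "dim_row (mat_sum n f S) = n" "dim_col (mat_sum n f S) = n"
  unfolding mat_sum_def by simp_all

lemma index_mat_sum [simp]:
  "i < n \<Longrightarrow> j < n \<Longrightarrow> mat_sum n f S $$ (i, j) = (\<Sum>x\<in>S. f x $$ (i, j))"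
  unfolding mat_sum_def by simp

lemma mat_sum_cong: "(\<And>x. x \<in> S \<Longrightarrow> f x = g x) \<Longrightarrow> mat_sum n f S = mat_sum n g S"
  unfolding mat_sum_def by (auto intro!: sum.cong)

lemma mat_sum_mult_right:
  fixes f :: "'b \<Rightarrow> 'a :: semiring_0 mat"
  assumes f: "\<And>x. x \<in> S \<Longrightarrow> f x \<in> carrier_mat n n" and B: "B \<in> carrier_mat n n"
  shows "mat_sum n f S * B = mat_sum n (\<lambda>x. f x * B) S"
proof (rule eq_matI)
  fix i j assume "i < dim_row (mat_sum n (\<lambda>x. f x * B) S)" "j < dim_col (mat_sum n (\<lambda>x. f x * B) S)"
  then have ij: "i < n" "j < n" by simp_all
  have "(mat_sum n f S * B) $$ (i, j) = (\<Sum>k<n. \<Sum>x\<in>S. f x $$ (i, k) * B $$ (k, j))"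
    using ij B by (simp add: scalar_prod_def lessThan_atLeast0 sum_distrib_right)
  also have "\<dots> = (\<Sum>x\<in>S. (f x * B) $$ (i, j))"
  proof (subst sum.swap, intro sum.cong refl)
    fix x assume "x \<in> S"
    with f[of x] ij B show "(\<Sum>k<n. f x $$ (i, k) * B $$ (k, j)) = (f x * B) $$ (i, j)"
      by (simp add: scalar_prod_def lessThan_atLeast0)
  qed
  finally show "(mat_sum n f S * B) $$ (i, j) = mat_sum n (\<lambda>x. f x * B) S $$ (i, j)"
    using ij by simp
qed (use B in auto)

lemma mat_sum_mult_left:
  fixes f :: "'b \<Rightarrow> 'a :: semiring_0 mat"
  assumes f: "\<And>x. x \<in> S \<Longrightarrow> f x \<in> carrier_mat n n" and B: "B \<in> carrier_mat n n"
  shows "B * mat_sum n f S = mat_sum n (\<lambda>x. B * f x) S"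
proof (rule eq_matI)
  fix i j assume "i < dim_row (mat_sum n (\<lambda>x. B * f x) S)" "j < dim_col (mat_sum n (\<lambda>x. B * f x) S)"
  then have ij: "i < n" "j < n" by simp_all
  have "(B * mat_sum n f S) $$ (i, j) = (\<Sum>k<n. \<Sum>x\<in>S. B $$ (i, k) * f x $$ (k, j))"
    using ij B by (simp add: scalar_prod_def lessThan_atLeast0 sum_distrib_left)
  also have "\<dots> = (\<Sum>x\<in>S. (B * f x) $$ (i, j))"
  proof (subst sum.swap, intro sum.cong refl)
    fix x assume "x \<in> S"
    with f[of x] ij B show "(\<Sum>k<n. B $$ (i, k) * f x $$ (k, j)) = (B * f x) $$ (i, j)"
      by (simp add: scalar_prod_def lessThan_atLeast0)
  qed
  finally show "(B * mat_sum n f S) $$ (i, j) = mat_sum n (\<lambda>x. B * f x) S $$ (i, j)"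
    using ij by simp
qed (use B in auto)

lemma mat_trace_mat_sum:
  assumes "\<And>x. x \<in> S \<Longrightarrow> f x \<in> carrier_mat n n"
  shows "mat_trace (mat_sum n f S) = (\<Sum>x\<in>S. mat_trace (f x))"
proof -
  have "mat_trace (mat_sum n f S) = (\<Sum>i<n. \<Sum>x\<in>S. f x $$ (i, i))"
    by (simp add: mat_trace_def)
  also have "\<dots> = (\<Sum>x\<in>S. \<Sum>i<n. f x $$ (i, i))"
    by (rule sum.swap)
  also have "\<dots> = (\<Sum>x\<in>S. mat_trace (f x))"
    using assms by (intro sum.cong) (auto simp: mat_trace_def)
  finally show ?thesis .
qed

lemma index_mult_single_entry_mult:
  fixes A B :: "'a :: semiring_1 mat"
  assumes "A \<in> carrier_mat n n" "B \<in> carrier_mat n n" "k < n" "l < n" "m < n" "p < n"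
  shows "(A * mat n n (\<lambda>(i, j). if i = l \<and> j = m then 1 else 0) * B) $$ (k, p)
    = A $$ (k, l) * B $$ (m, p)"
proof -
  let ?E = "mat n n (\<lambda>(i, j). if i = l \<and> j = m then 1 else 0) :: 'a mat"
  have row: "(A * ?E) $$ (k, j) = (if j = m then A $$ (k, l) else 0)" if "j < n" for j
    using assms that by (auto simp: scalar_prod_def if_distrib cong: if_cong)
  have "(A * ?E * B) $$ (k, p) = (\<Sum>j<n. (A * ?E) $$ (k, j) * B $$ (j, p))"
    using assms by (simp add: scalar_prod_def lessThan_atLeast0)
  also have "\<dots> = (\<Sum>j<n. if j = m then A $$ (k, l) * B $$ (j, p) else 0)"
    using row by (intro sum.cong) auto
  also have "\<dots> = A $$ (k, l) * B $$ (m, p)"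
    using assms by simp
  finally show ?thesis .
qed

lemma is_subspace_eigenspace:
  assumes "M \<in> carrier_mat n n"
  shows "is_subspace n {v \<in> carrier_vec n. M *\<^sub>v v = c \<cdot>\<^sub>v v}"
  using assms unfolding is_subspace_def
  by (auto simp: mult_add_distrib_mat_vec smult_add_distrib_vec mult_mat_vec smult_smult_assoc mult.commute)

lemma schur_lemma:
  assumes irr: "irreducible_rep G n \<rho>" and M: "M \<in> carrier_mat n n"
    and comm: "\<And>g. g \<in> carrier G \<Longrightarrow> M * \<rho> g = \<rho> g * M"
  shows "\<exists>c. M = c \<cdot>\<^sub>m 1\<^sub>m n"
proof -
  have rep: "\<And>g. g \<in> carrier G \<Longrightarrow> \<rho> g \<in> carrier_mat n n" and "0 < n"
    using irr unfolding irreducible_rep_def is_rep_def by auto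
  then obtain c v where v: "v \<in> carrier_vec n" "v \<noteq> 0\<^sub>v n" "M *\<^sub>v v = c \<cdot>\<^sub>v v"
    using spectrum_non_empty[OF M] M
    unfolding spectrum_def eigenvalue_def eigenvector_def by auto
  define W where "W = {w \<in> carrier_vec n. M *\<^sub>v w = c \<cdot>\<^sub>v w}"
  have invariant: "\<rho> g *\<^sub>v w \<in> W" if g: "g \<in> carrier G" and w: "w \<in> W" for g w
  proof -
    have wc: "w \<in> carrier_vec n" using w unfolding W_def by simp
    have "M *\<^sub>v (\<rho> g *\<^sub>v w) = \<rho> g *\<^sub>v (M *\<^sub>v w)"
      using comm[OF g] rep[OF g] M wc by (metis assoc_mult_mat_vec)
    also have "\<dots> = c \<cdot>\<^sub>v (\<rho> g *\<^sub>v w)"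
      using w rep[OF g] wc unfolding W_def by (simp add: mult_mat_vec)
    finally show ?thesis using rep[OF g] wc unfolding W_def by simp
  qed
  have "W = {0\<^sub>v n} \<or> W = carrier_vec n"
    using irr is_subspace_eigenspace[OF M] invariant unfolding irreducible_rep_def W_def by blast
  with v have W: "W = carrier_vec n" unfolding W_def by auto
  show ?thesis
  proof (intro exI eq_matI)
    fix i j assume "i < dim_row (c \<cdot>\<^sub>m 1\<^sub>m n)" "j < dim_col (c \<cdot>\<^sub>m 1\<^sub>m n)"
    then have ij: "i < n" "j < n" by simp_all
    have "M *\<^sub>v unit_vec n j = c \<cdot>\<^sub>v unit_vec n j"
      using W unit_vec_carrier[of n j] unfolding W_def by blast
    then have "(M *\<^sub>v unit_vec n j) $ i = (c \<cdot>\<^sub>v unit_vec n j) $ i" by simp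
    then show "M $$ (i, j) = (c \<cdot>\<^sub>m 1\<^sub>m n) $$ (i, j)" using M ij by simp
  qed (use M in auto)
qed

lemma (in group) sum_carrier_mult_right:
  assumes g: "g \<in> carrier G"
  shows "(\<Sum>a\<in>carrier G. f (a \<otimes> g)) = (\<Sum>a\<in>carrier G. f a)"
  by (rule sum.reindex_bij_witness[of _ "\<lambda>a. a \<otimes> inv g" "\<lambda>a. a \<otimes> g"])
    (use g in \<open>auto simp: m_assoc\<close>)

lemma (in group) mat_sum_carrier_mult_right:
  assumes g: "g \<in> carrier G"
  shows "mat_sum n (\<lambda>a. f (a \<otimes> g)) (carrier G) = mat_sum n f (carrier G)"
proof -
  have "(\<Sum>a\<in>carrier G. f (a \<otimes> g) $$ ij) = (\<Sum>a\<in>carrier G. f a $$ ij)" for ij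
    using sum_carrier_mult_right[OF g, of "\<lambda>a. f a $$ ij"] .
  then show ?thesis unfolding mat_sum_def by simp
qed

lemma (in group) inv_commutator_mult:
  assumes "a \<in> carrier G" "b \<in> carrier G" "g \<in> carrier G"
  shows "inv (commutator G a b) \<otimes> g = inv b \<otimes> inv a \<otimes> b \<otimes> (a \<otimes> g)"
  using assms unfolding commutator_def by (simp add: inv_mult_group m_assoc)

lemma (in group) commutator_closed [simp]:
  "a \<in> carrier G \<Longrightarrow> b \<in> carrier G \<Longrightarrow> commutator G a b \<in> carrier G"
  unfolding commutator_def by simp

locale irrep = group G for G (structure) +
  fixes n :: nat and \<rho> :: "'a \<Rightarrow> complex mat"
  assumes irreducible: "irreducible_rep G n \<rho>"
begin

lemma degree_pos: "0 < n"
  using irreducible unfolding irreducible_rep_def is_rep_def by simp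

lemma rep_carrier [simp]: "g \<in> carrier G \<Longrightarrow> \<rho> g \<in> carrier_mat n n"
  using irreducible unfolding irreducible_rep_def is_rep_def by simp

lemma rep_one: "\<rho> \<one> = 1\<^sub>m n"
  using irreducible unfolding irreducible_rep_def is_rep_def by simp

lemma rep_mult: "g \<in> carrier G \<Longrightarrow> h \<in> carrier G \<Longrightarrow> \<rho> (g \<otimes> h) = \<rho> g * \<rho> h"
  using irreducible unfolding irreducible_rep_def is_rep_def by simp

lemma dim_rep [simp]: "g \<in> carrier G \<Longrightarrow> dim_row (\<rho> g) = n" "g \<in> carrier G \<Longrightarrow> dim_col (\<rho> g) = n"
  by (metis carrier_matD rep_carrier)+

lemmas mult_square_carrier_mat [simp] = mult_carrier_mat[of _ n n _ n]

lemma rep_mult_inv: "g \<in> carrier G \<Longrightarrow> \<rho> g * \<rho> (inv g) = 1\<^sub>m n"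
  by (simp flip: rep_mult add: rep_one)

lemma mat_trace_conjugate:
  assumes "X \<in> carrier_mat n n" "a \<in> carrier G"
  shows "mat_trace (\<rho> (inv a) * X * \<rho> a) = mat_trace X"
proof -
  have "mat_trace (\<rho> (inv a) * X * \<rho> a) = mat_trace (\<rho> a * (\<rho> (inv a) * X))"
    by (rule mat_trace_mult_comm[of _ n n]) (use assms in auto)
  also have "\<rho> a * (\<rho> (inv a) * X) = X"
    using assms by (simp add: assoc_mult_mat[of _ n n _ n _ n, symmetric] rep_mult_inv)
  finally show ?thesis .
qed

lemma conjugation_average_commutes:
  assumes X: "X \<in> carrier_mat n n" and g: "g \<in> carrier G"
  shows "mat_sum n (\<lambda>a. \<rho> (inv a) * X * \<rho> a) (carrier G) * \<rho> g
    = \<rho> g * mat_sum n (\<lambda>a. \<rho> (inv a) * X * \<rho> a) (carrier G)"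
proof -
  have "mat_sum n (\<lambda>a. \<rho> (inv a) * X * \<rho> a) (carrier G) * \<rho> g
      = mat_sum n (\<lambda>a. \<rho> (inv a) * X * \<rho> (a \<otimes> g)) (carrier G)"
    using X g by (subst mat_sum_mult_right)
      (auto simp: rep_mult assoc_mult_mat[of _ n n _ n _ n] intro!: mat_sum_cong)
  also have "\<dots> = mat_sum n (\<lambda>a. \<rho> g * (\<rho> (inv (a \<otimes> g)) * X * \<rho> (a \<otimes> g))) (carrier G)"
  proof (rule mat_sum_cong)
    fix a assume a: "a \<in> carrier G"
    have "\<rho> (inv a) = \<rho> g * \<rho> (inv (a \<otimes> g))"
      using a g by (simp add: inv_mult_group flip: rep_mult m_assoc)
    then have "\<rho> (inv a) * X * \<rho> (a \<otimes> g) = \<rho> g * \<rho> (inv (a \<otimes> g)) * X * \<rho> (a \<otimes> g)"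
      by simp
    also have "\<dots> = \<rho> g * (\<rho> (inv (a \<otimes> g)) * X * \<rho> (a \<otimes> g))"
      using a g X by (simp add: assoc_mult_mat[of _ n n _ n _ n])
    finally show "\<rho> (inv a) * X * \<rho> (a \<otimes> g) = \<rho> g * (\<rho> (inv (a \<otimes> g)) * X * \<rho> (a \<otimes> g))" .
  qed
  also have "\<dots> = mat_sum n (\<lambda>a. \<rho> g * (\<rho> (inv a) * X * \<rho> a)) (carrier G)"
    using g by (rule mat_sum_carrier_mult_right)
  also have "\<dots> = \<rho> g * mat_sum n (\<lambda>a. \<rho> (inv a) * X * \<rho> a) (carrier G)"
    using X g by (simp add: mat_sum_mult_left)
  finally show ?thesis .
qed

lemma conjugation_average:
  assumes X: "X \<in> carrier_mat n n"
  shows "mat_sum n (\<lambda>a. \<rho> (inv a) * X * \<rho> a) (carrier G)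
    = (of_nat (card (carrier G)) * mat_trace X / of_nat n) \<cdot>\<^sub>m 1\<^sub>m n"
proof -
  obtain c where c: "mat_sum n (\<lambda>a. \<rho> (inv a) * X * \<rho> a) (carrier G) = c \<cdot>\<^sub>m 1\<^sub>m n"
    using schur_lemma[OF irreducible mat_sum_carrier conjugation_average_commutes[OF X]] by blast
  have "of_nat n * c = mat_trace (mat_sum n (\<lambda>a. \<rho> (inv a) * X * \<rho> a) (carrier G))"
    by (simp add: c mat_trace_smult[OF one_carrier_mat] mat_trace_one_mat)
  also have "\<dots> = (\<Sum>a\<in>carrier G. mat_trace (\<rho> (inv a) * X * \<rho> a))"
    using X by (intro mat_trace_mat_sum) auto
  also have "\<dots> = of_nat (card (carrier G)) * mat_trace X"
    using X by (simp add: mat_trace_conjugate)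
  finally have "c = of_nat (card (carrier G)) * mat_trace X / of_nat n"
    using degree_pos by (simp add: field_simps)
  with c show ?thesis by simp
qed

lemma entry_orthogonality:
  assumes "k < n" "l < n" "m < n" "p < n"
  shows "(\<Sum>a\<in>carrier G. \<rho> (inv a) $$ (k, l) * \<rho> a $$ (m, p))
    = (if l = m \<and> k = p then of_nat (card (carrier G)) / of_nat n else 0)"
proof -
  define E :: "complex mat" where "E = mat n n (\<lambda>(i, j). if i = l \<and> j = m then 1 else 0)"
  have E: "E \<in> carrier_mat n n" unfolding E_def by simp
  have "mat_trace E = (if l = m then 1 else 0)"
    unfolding mat_trace_def E_def using assms by (auto intro: sum.neutral)
  moreover have "(\<Sum>a\<in>carrier G. \<rho> (inv a) $$ (k, l) * \<rho> a $$ (m, p))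
      = mat_sum n (\<lambda>a. \<rho> (inv a) * E * \<rho> a) (carrier G) $$ (k, p)"
  proof -
    have "\<rho> (inv a) $$ (k, l) * \<rho> a $$ (m, p) = (\<rho> (inv a) * E * \<rho> a) $$ (k, p)"
      if "a \<in> carrier G" for a
      unfolding E_def using that assms by (intro index_mult_single_entry_mult[symmetric]) auto
    then show ?thesis using assms by simp
  qed
  ultimately show ?thesis
    using assms by (simp add: conjugation_average[OF E])
qed

lemma character_weighted_sum:
  "mat_sum n (\<lambda>a. mat_trace (\<rho> (inv a)) \<cdot>\<^sub>m \<rho> a) (carrier G)
    = (of_nat (card (carrier G)) / of_nat n) \<cdot>\<^sub>m 1\<^sub>m n"
proof (rule eq_matI)
  fix m p assume "m < dim_row ((of_nat (card (carrier G)) / of_nat n) \<cdot>\<^sub>m 1\<^sub>m n)"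
    and "p < dim_col ((of_nat (card (carrier G)) / of_nat n) \<cdot>\<^sub>m 1\<^sub>m n)"
  then have mp: "m < n" "p < n" by simp_all
  have "mat_sum n (\<lambda>a. mat_trace (\<rho> (inv a)) \<cdot>\<^sub>m \<rho> a) (carrier G) $$ (m, p)
      = (\<Sum>k<n. \<Sum>a\<in>carrier G. \<rho> (inv a) $$ (k, k) * \<rho> a $$ (m, p))"
    using mp by (simp add: mat_trace_def sum_distrib_right sum.swap[of _ "carrier G"])
  also have "\<dots> = (\<Sum>k<n. if k = m \<and> k = p then of_nat (card (carrier G)) / of_nat n else 0)"
    using mp by (intro sum.cong refl) (simp add: entry_orthogonality)
  also have "\<dots> = ((of_nat (card (carrier G)) / of_nat n) \<cdot>\<^sub>m 1\<^sub>m n) $$ (m, p)"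
    using mp by (simp add: sum.delta)
  finally show "mat_sum n (\<lambda>a. mat_trace (\<rho> (inv a)) \<cdot>\<^sub>m \<rho> a) (carrier G) $$ (m, p)
      = ((of_nat (card (carrier G)) / of_nat n) \<cdot>\<^sub>m 1\<^sub>m n) $$ (m, p)" .
qed auto

lemma sum_trace_conjugate_mult:
  assumes Z: "Z \<in> carrier_mat n n" and W: "W \<in> carrier_mat n n"
  shows "(\<Sum>b\<in>carrier G. mat_trace (\<rho> (inv b) * Z * \<rho> b * W))
    = of_nat (card (carrier G)) / of_nat n * mat_trace Z * mat_trace W"
proof -
  have "(\<Sum>b\<in>carrier G. mat_trace (\<rho> (inv b) * Z * \<rho> b * W))
      = mat_trace (mat_sum n (\<lambda>b. \<rho> (inv b) * Z * \<rho> b) (carrier G) * W)"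
    using Z W by (simp add: mat_sum_mult_right mat_trace_mat_sum)
  then show ?thesis
    using Z W by (simp add: conjugation_average mult_smult_assoc_mat[OF one_carrier_mat W]
        mat_trace_smult[OF W])
qed

lemma sum_character_mult_trace:
  assumes Y: "Y \<in> carrier_mat n n"
  shows "(\<Sum>a\<in>carrier G. mat_trace (\<rho> (inv a)) * mat_trace (\<rho> a * Y))
    = of_nat (card (carrier G)) / of_nat n * mat_trace Y"
proof -
  have "(\<Sum>a\<in>carrier G. mat_trace (\<rho> (inv a)) * mat_trace (\<rho> a * Y))
      = mat_trace (mat_sum n (\<lambda>a. mat_trace (\<rho> (inv a)) \<cdot>\<^sub>m \<rho> a) (carrier G) * Y)"
    using Y by (simp add: mat_sum_mult_right mat_trace_mat_sum mult_smult_assoc_mat[of _ n n]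
        mat_trace_smult[of _ n])
  then show ?thesis
    using Y by (simp add: character_weighted_sum mult_smult_assoc_mat[OF one_carrier_mat Y]
        mat_trace_smult[OF Y])
qed

lemma commutator_trace_sum:
  assumes g: "g \<in> carrier G"
  shows "(\<Sum>a\<in>carrier G. \<Sum>b\<in>carrier G. mat_trace (\<rho> (inv (commutator G a b) \<otimes> g)))
    = (of_nat (card (carrier G)) / of_nat n)^2 * mat_trace (\<rho> g)"
proof -
  have "(\<Sum>a\<in>carrier G. \<Sum>b\<in>carrier G. mat_trace (\<rho> (inv (commutator G a b) \<otimes> g)))
      = (\<Sum>a\<in>carrier G. \<Sum>b\<in>carrier G. mat_trace (\<rho> (inv b) * \<rho> (inv a) * \<rho> b * (\<rho> a * \<rho> g)))"
    using g by (intro sum.cong refl) (simp add: inv_commutator_mult rep_mult)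
  also have "\<dots> = (\<Sum>a\<in>carrier G. of_nat (card (carrier G)) / of_nat n
      * (mat_trace (\<rho> (inv a)) * mat_trace (\<rho> a * \<rho> g)))"
    using g by (intro sum.cong refl) (simp add: sum_trace_conjugate_mult)
  also have "\<dots> = of_nat (card (carrier G)) / of_nat n
      * (\<Sum>a\<in>carrier G. mat_trace (\<rho> (inv a)) * mat_trace (\<rho> a * \<rho> g))"
    by (simp add: sum_distrib_left)
  also have "\<dots> = (of_nat (card (carrier G)) / of_nat n)^2 * mat_trace (\<rho> g)"
    using g by (simp add: sum_character_mult_trace power2_eq_square)
  finally show ?thesis .
qed

end

lemma IrrE:
  assumes "group G" and "\<chi> \<in> Irr G"
  obtains n \<rho> where "irrep G n \<rho>"
    and "\<chi> = (\<lambda>g. if g \<in> carrier G then mat_trace (\<rho> g) else 0)"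
  using assms unfolding Irr_def irrep_def irrep_axioms_def by blast

lemma Irr_one_eq_of_nat_pos:
  fixes G (structure)
  assumes "group G" and "\<chi> \<in> Irr G"
  shows "\<exists>n>0. \<chi> \<one> = of_nat n"
proof -
  obtain n \<rho> where "irrep G n \<rho>" and \<chi>: "\<chi> = (\<lambda>g. if g \<in> carrier G then mat_trace (\<rho> g) else 0)"
    using assms by (rule IrrE)
  then interpret irrep G n \<rho> by simp
  show ?thesis using \<chi> degree_pos by (simp add: rep_one mat_trace_one_mat)
qed

lemma Irr_commutator_sum:
  fixes G (structure)
  assumes "group G" and "\<chi> \<in> Irr G" and g: "g \<in> carrier G"
  shows "(\<Sum>a\<in>carrier G. \<Sum>b\<in>carrier G. \<chi> (inv (commutator G a b) \<otimes> g))
    = of_nat (card (carrier G))^2 / (\<chi> \<one>)^2 * \<chi> g"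
proof -
  obtain n \<rho> where "irrep G n \<rho>" and \<chi>: "\<chi> = (\<lambda>g. if g \<in> carrier G then mat_trace (\<rho> g) else 0)"
    using assms(1,2) by (rule IrrE)
  then interpret irrep G n \<rho> by simp
  have "(\<Sum>a\<in>carrier G. \<Sum>b\<in>carrier G. \<chi> (inv (commutator G a b) \<otimes> g))
      = (\<Sum>a\<in>carrier G. \<Sum>b\<in>carrier G. mat_trace (\<rho> (inv (commutator G a b) \<otimes> g)))"
    using g by (simp add: \<chi>)
  also have "\<dots> = (of_nat (card (carrier G)) / of_nat n)^2 * mat_trace (\<rho> g)"
    using g by (rule commutator_trace_sum)
  finally show ?thesis
    using g by (simp add: \<chi> rep_one mat_trace_one_mat power_divide)
qed

lemma exp_xi_virtual_character:
  fixes G (structure) and a :: "nat \<Rightarrow> real"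
  assumes "group G" and "finite (carrier G)" and irr: "\<And>i. i < q \<Longrightarrow> \<chi> i \<in> Irr G"
    and \<phi>: "\<And>h. h \<in> carrier G \<Longrightarrow> \<phi> h = (\<Sum>i<q. complex_of_real (a i) * \<chi> i h)"
    and real_valued: "\<And>h. h \<in> carrier G \<Longrightarrow> \<phi> h \<in> \<real>"
    and g: "g \<in> carrier G"
  shows "complex_of_real (exp_xi G \<phi> g) = (\<Sum>i<q. complex_of_real (a i) / (\<chi> i \<one>)^2 * \<chi> i g)"
proof -
  interpret group G by fact
  have "card (carrier G) > 0"
    using \<open>finite (carrier G)\<close> by (auto simp: card_gt_0_iff)
  have "complex_of_real (exp_xi G \<phi> g)
      = (\<Sum>x\<in>carrier G. \<Sum>y\<in>carrier G. \<phi> (inv (commutator G x y) \<otimes> g)) / of_nat (card (carrier G))^2"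
    using g real_valued by (simp add: exp_xi_def)
  also have "\<dots> = (\<Sum>i<q. complex_of_real (a i)
      * (\<Sum>x\<in>carrier G. \<Sum>y\<in>carrier G. \<chi> i (inv (commutator G x y) \<otimes> g))) / of_nat (card (carrier G))^2"
    using g by (simp add: \<phi> sum_distrib_left sum.swap[of _ "{..<q}"])
  also have "\<dots> = (\<Sum>i<q. complex_of_real (a i) / (\<chi> i \<one>)^2 * \<chi> i g)"
    using \<open>card (carrier G) > 0\<close> g irr
    by (simp add: Irr_commutator_sum[OF \<open>group G\<close>] sum_divide_distrib)
  finally show ?thesis .
qed

lemma comm_prob_mult_le_exp_xi:
  fixes G (structure)
  assumes "group G" and "finite (carrier G)"
    and nonneg: "\<And>h. h \<in> carrier G \<Longrightarrow> 0 \<le> Re (\<phi> h)" and g: "g \<in> carrier G"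
  shows "comm_prob G g * Re (\<phi> \<one>) \<le> exp_xi G \<phi> g"
proof -
  interpret group G by fact
  define S where "S = {(x, y). x \<in> carrier G \<and> y \<in> carrier G \<and> commutator G x y = g}"
  have "real (card S) * Re (\<phi> \<one>) = (\<Sum>(x, y)\<in>S. Re (\<phi> \<one>))"
    by simp
  also have "\<dots> = (\<Sum>(x, y)\<in>S. Re (\<phi> (inv (commutator G x y) \<otimes> g)))"
    using g by (intro sum.cong) (auto simp: S_def)
  also have "\<dots> \<le> (\<Sum>(x, y)\<in>carrier G \<times> carrier G. Re (\<phi> (inv (commutator G x y) \<otimes> g)))"
    using \<open>finite (carrier G)\<close> g by (intro sum_mono2) (auto simp: S_def nonneg)
  also have "\<dots> = (\<Sum>x\<in>carrier G. \<Sum>y\<in>carrier G. Re (\<phi> (inv (commutator G x y) \<otimes> g)))"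
    by (simp add: sum.cartesian_product)
  finally have "real (card S) * Re (\<phi> \<one>) / real (card (carrier G))^2 \<le> exp_xi G \<phi> g"
    unfolding exp_xi_def by (simp add: divide_right_mono)
  then show ?thesis
    by (simp add: comm_prob_def S_def)
qed

lemma Re_nonneg_combination_Irr_one_pos:
  fixes G (structure) and a :: "nat \<Rightarrow> real"
  assumes "group G" and irr: "\<And>i. i < q \<Longrightarrow> \<chi> i \<in> Irr G"
    and nonneg: "\<And>i. i < q \<Longrightarrow> 0 \<le> a i" and "j < q" and "a j \<noteq> 0"
  shows "0 < Re (\<Sum>i<q. complex_of_real (a i) * \<chi> i \<one>)"
proof -
  have degree: "0 < Re (\<chi> i \<one>)" if "i < q" for i
    using Irr_one_eq_of_nat_pos[OF \<open>group G\<close> irr[OF that]] by auto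
  have "0 < a j * Re (\<chi> j \<one>)"
    using assms degree by (simp add: order.not_eq_order_implies_strict)
  also have "\<dots> \<le> (\<Sum>i<q. a i * Re (\<chi> i \<one>))"
    using \<open>j < q\<close> nonneg degree by (intro member_le_sum) (auto simp: less_imp_le)
  finally show ?thesis by (simp add: Re_sum)
qed

theorem corollary1:
  fixes G (structure) and q :: nat and a :: "nat \<Rightarrow> real"
    and \<chi> :: "nat \<Rightarrow> 'a \<Rightarrow> complex" and \<phi> :: "'a \<Rightarrow> complex"
  assumes grp: "group G" and fin: "finite (carrier G)"
    and irr: "\<forall>i<q. \<chi> i \<in> Irr G"
    and phi: "\<forall>h\<in>carrier G. \<phi> h = (\<Sum>i<q. complex_of_real (a i) * \<chi> i h)"
    and real_valued: "\<forall>h\<in>carrier G. \<phi> h \<in> \<real>"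
  shows "(\<forall>g\<in>carrier G. complex_of_real (exp_xi G \<phi> g)
            = (\<Sum>i<q. complex_of_real (a i) / (\<chi> i \<one>)^2 * \<chi> i g))
    \<and> (inj_on \<chi> {..<q} \<and> (\<forall>h\<in>carrier G. Re (\<phi> h) \<ge> 0) \<and> (\<forall>i<q. a i \<ge> 0) \<and> (\<exists>i<q. a i \<noteq> 0)
         \<longrightarrow> (\<forall>g\<in>carrier G. comm_prob G g \<le> exp_xi G \<phi> g / Re (\<phi> \<one>)
            \<and> complex_of_real (exp_xi G \<phi> g / Re (\<phi> \<one>))
              = (\<Sum>i<q. complex_of_real (a i) / (\<chi> i \<one>)^2 * \<chi> i g)
                / (\<Sum>i<q. complex_of_real (a i) * \<chi> i \<one>)))"
proof -
  have xi: "complex_of_real (exp_xi G \<phi> g) = (\<Sum>i<q. complex_of_real (a i) / (\<chi> i \<one>)^2 * \<chi> i g)"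
    if "g \<in> carrier G" for g
    using exp_xi_virtual_character[OF grp fin] irr phi real_valued that by blast
  have phi_one: "\<phi> \<one> = (\<Sum>i<q. complex_of_real (a i) * \<chi> i \<one>)"
    using phi grp by (simp add: monoid.one_closed group.is_monoid)
  show ?thesis
  proof (intro conjI impI ballI xi)
    fix g assume "g \<in> carrier G"
      and "inj_on \<chi> {..<q} \<and> (\<forall>h\<in>carrier G. Re (\<phi> h) \<ge> 0) \<and> (\<forall>i<q. a i \<ge> 0) \<and> (\<exists>i<q. a i \<noteq> 0)"
    then have g: "g \<in> carrier G" and nonneg: "\<forall>h\<in>carrier G. Re (\<phi> h) \<ge> 0"
      and "\<forall>i<q. a i \<ge> 0" and "\<exists>i<q. a i \<noteq> 0" by auto
    then have "0 < Re (\<phi> \<one>)"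
      using Re_nonneg_combination_Irr_one_pos[OF grp] irr phi_one by metis
    then show "comm_prob G g \<le> exp_xi G \<phi> g / Re (\<phi> \<one>)"
      using comm_prob_mult_le_exp_xi[OF grp fin] nonneg g by (simp add: pos_le_divide_eq)
    have "\<phi> \<one> = complex_of_real (Re (\<phi> \<one>))"
      using real_valued grp by (simp add: monoid.one_closed group.is_monoid)
    then show "complex_of_real (exp_xi G \<phi> g / Re (\<phi> \<one>))
        = (\<Sum>i<q. complex_of_real (a i) / (\<chi> i \<one>)^2 * \<chi> i g) / (\<Sum>i<q. complex_of_real (a i) * \<chi> i \<one>)"
      using xi[OF g] phi_one by simp
  qed
qed

end
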